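(* If $m,n\in\mathbb{Z}$ with $\gcd(m,n)=1$ (and $mn(m+n)\ne0$), then $A(m,n)=7^a(14b+1)$ for some integers $a,b\ge 0$, and every prime factor of $14b+1$ is congruent to $1 \pmod 7$. Moreover, for every prime $p\equiv 1\pmod 7$ there are infinitely many values $c=-\frac{A(m,n)}{B(m,n)}$ (with $\gcd(m,n)=1$, $mn(m+n)\neq0$) such that $p\mid A(m,n)$; for each of these $f_c(x)=x^2+c$ has a rational $3$-cycle.
   Context: $A(m,n)=m^6+2m^5n+4m^4n^2+8m^3n^3+9m^2n^4+4mn^5+n^6$, $B(m,n)=4m^2n^2(m+n)^2$. Standing fact: $f_c(x)=x^2+c$ ($c\in\mathbb{Q}$) has a rational $3$-cycle (orbit of a rational point of minimal period 3) if and only if $c=-A(m,n)/B(m,n)$ for some coprime integers $m,n$ with $mn(m+n)\neq 0$, and this fraction is then in lowest terms. *)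

theory Defs
  imports Complex_Main "HOL-Computational_Algebra.Primes"
begin

definition A :: "int \<Rightarrow> int \<Rightarrow> int" where
  "A m n = m^6 + 2*m^5*n + 4*m^4*n^2 + 8*m^3*n^3 + 9*m^2*n^4 + 4*m*n^5 + n^6"

definition B :: "int \<Rightarrow> int \<Rightarrow> int" where
  "B m n = 4*m^2*n^2*(m+n)^2"

definition fc :: "rat \<Rightarrow> rat \<Rightarrow> rat" where
  "fc c x = x^2 + c"

definition has_rational_3cycle :: "rat \<Rightarrow> bool" where
  "has_rational_3cycle c \<longleftrightarrow> (\<exists>x::rat. (fc c ^^ 3) x = x \<and> fc c x \<noteq> x)"

end

theory Submission
  imports Defs "HOL-Number_Theory.Number_Theory"
begin

(* A(m,n) is odd and positive, and it divides the seventh cyclotomic form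
   (u^7 - v^7)/(u - v) at u = 3n^4 + 6mn^3 + 3m^2n^2 + m^3n + m^4, v = 2n^4. A prime
   q \<noteq> 7 dividing that form but not v makes u/v an element of order 7 modulo q, so
   q = 1 (mod 7); the cofactor of the 7-power in A(m,n) is then 1 mod 7 and odd, i.e.
   1 mod 14. Conversely, if p = 1 (mod 7) and w has order 7 modulo p, then p divides
   A(w + w^4, 1) and hence A(m, 1) for every m = w + w^4 (mod p); since
   A(m,1)/B(m,1) \<ge> m/16 these parameters give arbitrarily negative values of c. The
   3-cycle is explicit: its points are N_i / (2mn(m+n)) with cubic numerators N_i. *)

lemma fermat_theorem_int:
  fixes q x :: int
  assumes "prime q" and "\<not> q dvd x"
  shows "[x ^ (nat q - 1) = 1] (mod q)"
proof -
  define a where "a = nat (x mod q)"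
  have q: "q = int (nat q)"
    using prime_gt_0_int[OF assms(1)] by simp
  have "prime (nat q)"
    using assms(1) q by (metis prime_int_nat_transfer)
  have a: "int a = x mod q"
    using prime_gt_0_int[OF assms(1)] unfolding a_def by simp
  have "\<not> q dvd int a"
    using assms(2) a by (simp add: dvd_mod_iff)
  then have "\<not> nat q dvd a"
    using q by (metis of_nat_dvd_iff)
  then have "[a ^ (nat q - 1) = 1] (mod nat q)"
    using fermat_theorem \<open>prime (nat q)\<close> by blast
  then have "[int a ^ (nat q - 1) = 1] (mod q)"
    using q cong_int_iff by (metis of_nat_1 of_nat_power)
  moreover have "[x = int a] (mod q)"
    using a by (simp add: cong_def)
  then have "[x ^ (nat q - 1) = int a ^ (nat q - 1)] (mod q)"
    by (rule cong_pow)
  ultimately show ?thesis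
    using cong_trans by blast
qed

(* If l does not divide q - 1, pick l s = 1 (mod q - 1); by Fermat z^(l s) = z modulo q,
   so z \<mapsto> z^l is injective modulo q. *)
lemma prime_mod_eq_1_if_power_cong:
  fixes q x y :: int and l :: nat
  assumes q: "prime q" and l: "prime l"
    and pow: "[x ^ l = y ^ l] (mod q)" and ne: "\<not> [x = y] (mod q)" and y: "\<not> q dvd y"
  shows "q mod int l = 1"
proof (rule ccontr)
  assume "q mod int l \<noteq> 1"
  moreover have "q - 1 = int (nat q - 1)"
    using prime_ge_2_int[OF q] by simp
  ultimately have "\<not> l dvd nat q - 1"
    using l prime_gt_1_nat
    by (metis mod_eq_dvd_iff mod_less of_nat_dvd_iff of_nat_1 zmod_int)
  then have "coprime l (nat q - 1)"
    using l prime_imp_coprime by blast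
  then obtain s j where sj: "l * s = (nat q - 1) * j + 1"
    using bezout_nat[of l "nat q - 1"] l prime_gt_0_nat by auto
  have x: "\<not> q dvd x"
  proof
    assume "q dvd x"
    then have "q dvd x ^ l"
      using l by (metis dvd_power dvd_trans prime_gt_0_nat)
    then have "q dvd y ^ l"
      using pow cong_dvd_iff by blast
    then show False
      using y q prime_dvd_power by blast
  qed
  have reduce: "[z ^ (l * s) = z] (mod q)" if "\<not> q dvd z" for z
  proof -
    have "[(z ^ (nat q - 1)) ^ j * z = 1 ^ j * z] (mod q)"
      using fermat_theorem_int[OF q that] by (intro cong_mult cong_pow cong_refl)
    moreover have "z ^ (l * s) = (z ^ (nat q - 1)) ^ j * z"
      by (simp add: sj power_add power_mult)
    ultimately show ?thesis
      by simp
  qed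
  have "[(x ^ l) ^ s = (y ^ l) ^ s] (mod q)"
    using pow by (rule cong_pow)
  then have "[x = y] (mod q)"
    using reduce[OF x] reduce[OF y] by (metis cong_sym cong_trans power_mult)
  with ne show False ..
qed

lemma prime_factor_of_cyclotomic_form:
  fixes q x y :: int and l :: nat
  assumes q: "prime q" and l: "prime l"
    and dvd: "q dvd (\<Sum>i<l. x ^ i * y ^ (l - 1 - i))" and y: "\<not> q dvd y"
  shows "q = int l \<or> q mod int l = 1"
proof (cases "[x = y] (mod q)")
  case True
  have "[(\<Sum>i<l. x ^ i * y ^ (l - 1 - i)) = (\<Sum>i<l. y ^ i * y ^ (l - 1 - i))] (mod q)"
    using True by (intro cong_sum cong_mult cong_pow cong_refl)
  also have "(\<Sum>i<l. y ^ i * y ^ (l - 1 - i)) = int l * y ^ (l - 1)"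
    by (simp add: power_add[symmetric])
  finally have "q dvd int l * y ^ (l - 1)"
    using dvd cong_dvd_iff by blast
  then have "q dvd int l"
    using q y by (meson prime_dvd_mult_iff prime_dvd_power)
  moreover have "prime (int l)"
    using l by simp
  ultimately show ?thesis
    using q primes_dvd_imp_eq by blast
next
  case False
  obtain n where n: "l = Suc n"
    using l prime_gt_0_nat gr0_implies_Suc by blast
  have "x ^ l - y ^ l = (x - y) * (\<Sum>i<l. x ^ i * y ^ (l - 1 - i))"
    unfolding n using diff_power_eq_sum[of x n y] by simp
  then have "[x ^ l = y ^ l] (mod q)"
    using dvd by (simp add: cong_iff_dvd_diff)
  then show ?thesis
    using prime_mod_eq_1_if_power_cong[OF q l _ False y] by blast
qed

lemma cong_1_if_prime_factors_cong_1:
  fixes y k :: int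
  assumes "y > 0" and "\<And>q. prime q \<Longrightarrow> q dvd y \<Longrightarrow> [q = 1] (mod k)"
  shows "[y = 1] (mod k)"
  using assms
proof (induction y rule: prime_divisors_induct)
  case zero
  then show ?case by simp
next
  case (unit y)
  then show ?case by simp
next
  case (factor p y)
  have "y > 0"
    using factor.prems(1) prime_gt_0_int[OF factor.hyps] zero_less_mult_pos by blast
  then have "[y = 1] (mod k)"
    using factor.IH factor.prems(2) by simp
  moreover have "[p = 1] (mod k)"
    using factor.hyps factor.prems(2) by simp
  ultimately show ?case
    using cong_mult by fastforce
qed

lemma nontrivial_root_of_unity_mod_prime:
  fixes p d :: nat
  assumes p: "prime p" and d: "d dvd p - 1" "d > 1"
  shows "\<exists>w. [w ^ d = 1] (mod p) \<and> \<not> [w = 1] (mod p)"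
proof -
  obtain g where "residue_primroot p g"
    using prime_primitive_root_exists[of p] p prime_gt_1_nat by blast
  then have ord_g: "ord p g = p - 1"
    using p by (simp add: residue_primroot_def totient_prime)
  obtain e where e: "p - 1 = d * e"
    using d(1) by blast
  have "0 < e" "e < p - 1"
    using e d(2) prime_gt_1_nat[OF p] by (auto intro: Nat.gr0I)
  then have "\<not> [g ^ e = 1] (mod p)"
    using ord_minimal ord_g by simp
  moreover have "[(g ^ e) ^ d = 1] (mod p)"
    using ord[of g p] unfolding ord_g e by (metis power_mult mult.commute)
  ultimately show ?thesis
    by blast
qed

lemma sum_lessThan_7:
  fixes f :: "nat \<Rightarrow> 'a::comm_monoid_add"
  shows "(\<Sum>i<7. f i) = f 0 + f 1 + f 2 + f 3 + f 4 + f 5 + f 6"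
  by (simp add: eval_nat_numeral ac_simps)

lemma cyclotomic_form_7_eq_A_mult:
  fixes m n :: int
  defines "u \<equiv> 3*n^4 + 6*m*n^3 + 3*m^2*n^2 + m^3*n + m^4" and "v \<equiv> 2*n^4"
  shows "(\<Sum>i<7. u ^ i * v ^ (7 - 1 - i)) = A m n *
    (2059*n^18 + 10028*m*n^17 + 24613*m^2*n^16 + 39608*m^3*n^15 + 48322*m^4*n^14
     + 49256*m^5*n^13 + 43636*m^6*n^12 + 33656*m^7*n^11 + 22963*m^8*n^10 + 14204*m^9*n^9
     + 7869*m^10*n^8 + 3880*m^11*n^7 + 1759*m^12*n^6 + 708*m^13*n^5 + 245*m^14*n^4
     + 80*m^15*n^3 + 21*m^16*n^2 + 4*m^17*n + m^18)"
  unfolding sum_lessThan_7 by simp (unfold A_def u_def v_def, Groebner_Basis.algebra)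

lemma A_at_root_of_unity:
  fixes w :: int
  shows "A (w + w^4) 1 = (\<Sum>i<7. w ^ i) *
    (1 + 3*w + 5*w^2 - w^3 + 12*w^5 + 5*w^6 - 8*w^7 + 6*w^8 + 16*w^9 - 7*w^10 - 4*w^11
     + 15*w^12 - 2*w^13 - 4*w^14 + 6*w^15 - w^17 + w^18)"
  unfolding sum_lessThan_7 A_def power_one power_0 power_one_right mult_1_right
  by Groebner_Basis.algebra

lemma A_odd:
  assumes "coprime m n"
  shows "odd (A m n)"
proof -
  have "A m n = m^6 + m^2*n^4 + n^6 + 2*(m^5*n + 2*m^4*n^2 + 4*m^3*n^3 + 4*m^2*n^4 + 2*m*n^5)"
    unfolding A_def by Groebner_Basis.algebra
  moreover have "odd m \<or> odd n"
    using coprime_common_divisor[OF assms, of 2] by auto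
  ultimately show ?thesis
    by auto
qed

lemma A_pos:
  assumes "coprime m n"
  shows "A m n > 0"
proof -
  have "16 * A m n = (4*m^3 + 4*m^2*n + m*n^2)^2 + 10*n^2*(2*m^2 + 3*m*n + n^2)^2
      + n^4*(9*m^2 + (2*m + n)^2 + 5*n^2)"
    unfolding A_def by Groebner_Basis.algebra
  also have "\<dots> \<ge> 0"
    by (intro add_nonneg_nonneg mult_nonneg_nonneg) auto
  finally have "A m n \<ge> 0"
    by simp
  moreover have "A m n \<noteq> 0"
    using A_odd[OF assms] by auto
  ultimately show ?thesis
    by simp
qed

lemma prime_factor_of_A:
  fixes q m n :: int
  assumes q: "prime q" and dvd: "q dvd A m n" and cop: "coprime m n"
  shows "q = 7 \<or> q mod 7 = 1"
proof -
  have "\<not> q dvd n"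
  proof
    assume "q dvd n"
    moreover have "A m n = m^6 + n*(2*m^5 + 4*m^4*n + 8*m^3*n^2 + 9*m^2*n^3 + 4*m*n^4 + n^5)"
      unfolding A_def by Groebner_Basis.algebra
    ultimately have "q dvd m ^ 6"
      using dvd by (metis dvd_add_left_iff dvd_mult2)
    then have "q dvd m"
      using q prime_dvd_power by blast
    with \<open>q dvd n\<close> show False
      using q cop coprime_common_divisor not_prime_unit by blast
  qed
  moreover have "q \<noteq> 2"
    using A_odd[OF cop] dvd by auto
  moreover have "prime (2::int)"
    by simp
  ultimately have v: "\<not> q dvd 2 * n^4"
    using q by (metis prime_dvd_mult_iff prime_dvd_power primes_dvd_imp_eq)
  have cyc: "q dvd (\<Sum>i<7. (3*n^4 + 6*m*n^3 + 3*m^2*n^2 + m^3*n + m^4) ^ i * (2*n^4) ^ (7 - 1 - i))"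
    unfolding cyclotomic_form_7_eq_A_mult using dvd by simp
  show ?thesis
    using prime_factor_of_cyclotomic_form[OF q _ cyc v] by simp
qed

lemma A_eq_7_power_times_14b_plus_1:
  fixes m n :: int
  assumes cop: "coprime m n"
  shows "\<exists>a b :: nat. A m n = 7 ^ a * (14 * int b + 1) \<and>
           (\<forall>q. prime q \<and> q dvd (14 * int b + 1) \<longrightarrow> q mod 7 = 1)"
proof -
  define a where "a = multiplicity 7 (A m n)"
  have "A m n \<noteq> 0" "\<not> is_unit (7 :: int)"
    using A_pos[OF cop] by auto
  then obtain y where y: "A m n = 7 ^ a * y" "\<not> 7 dvd y"
    using multiplicity_decompose' unfolding a_def by blast
  have "y > 0"
    using zero_less_mult_pos[of "7 ^ a" y] y(1) A_pos[OF cop] by simp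
  have "odd y"
    using A_odd[OF cop] y(1) by simp
  have factors: "q mod 7 = 1" if "prime q" "q dvd y" for q
  proof -
    have "q dvd A m n"
      using y(1) \<open>q dvd y\<close> by simp
    then have "q = 7 \<or> q mod 7 = 1"
      using prime_factor_of_A \<open>prime q\<close> cop by blast
    then show ?thesis
      using y(2) \<open>q dvd y\<close> by auto
  qed
  have "y mod 7 = 1"
    using cong_1_if_prime_factors_cong_1[OF \<open>y > 0\<close>] factors by (simp add: cong_def)
  moreover have "y mod 2 = 1"
    using \<open>odd y\<close> by (simp add: odd_iff_mod_2_eq_one)
  ultimately have "y mod 14 = 1"
    by presburger
  then have "y = 14 * int (nat (y div 14)) + 1"
    using \<open>y > 0\<close> div_mult_mod_eq[of y 14] by simp
  then show ?thesis
    using y(1) factors by (intro exI[of _ a] exI[of _ "nat (y div 14)"]) simp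
qed

lemma fc_of_int_fraction:
  fixes a x y d :: int
  assumes "d \<noteq> 0" and "x^2 - a = y * d"
  shows "fc (- of_int a / of_int (d^2)) (of_int x / of_int d) = of_int y / of_int d"
proof -
  have "(of_int x :: rat)^2 - of_int a = of_int y * of_int d"
    using arg_cong[OF assms(2), of "of_int :: int \<Rightarrow> rat"] by simp
  then show ?thesis
    using assms(1) unfolding fc_def by (simp add: field_simps power2_eq_square)
qed

lemma has_rational_3cycle_A_B:
  fixes m n :: int
  assumes "m * n * (m + n) \<noteq> 0"
  shows "has_rational_3cycle (- of_int (A m n) / of_int (B m n))"
proof -
  define d where "d = 2*m*n*(m+n)"
  define x0 where "x0 = m^3 + 2*m^2*n + m*n^2 + n^3"
  define x1 where "x1 = m^3 - m*n^2 - n^3"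
  define x2 where "x2 = - (m^3) - 2*m^2*n - 3*m*n^2 - n^3"
  define c where "c = - of_int (A m n) / (of_int (d^2) :: rat)"
  have d: "d \<noteq> 0"
    using assms unfolding d_def by simp
  have "B m n = d^2"
    unfolding B_def d_def by Groebner_Basis.algebra
  then have c: "c = - of_int (A m n) / of_int (B m n)"
    unfolding c_def by simp
  have "x0^2 - A m n = x1 * d" "x1^2 - A m n = x2 * d" "x2^2 - A m n = x0 * d"
    unfolding x0_def x1_def x2_def d_def A_def by Groebner_Basis.algebra+
  then have step: "fc c (of_int x0 / of_int d) = of_int x1 / of_int d"
      "fc c (of_int x1 / of_int d) = of_int x2 / of_int d"
      "fc c (of_int x2 / of_int d) = of_int x0 / of_int d"
    unfolding c_def using fc_of_int_fraction[OF d] by blast+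
  have "n \<noteq> 0"
    using assms by auto
  have "4 * (m^2 + m*n + n^2) = (2*m + n)^2 + 3*n^2"
    by Groebner_Basis.algebra
  also have "\<dots> > 0"
    using \<open>n \<noteq> 0\<close> by (intro add_nonneg_pos) simp_all
  finally have "m^2 + m*n + n^2 \<noteq> 0"
    by auto
  moreover have "x0 - x1 = 2 * n * (m^2 + m*n + n^2)"
    unfolding x0_def x1_def by Groebner_Basis.algebra
  ultimately have "x0 \<noteq> x1"
    using \<open>n \<noteq> 0\<close> by auto
  then have "fc c (of_int x0 / of_int d) \<noteq> of_int x0 / of_int d"
    using step(1) d by (simp add: divide_cancel_right)
  moreover have "(fc c ^^ 3) (of_int x0 / of_int d) = of_int x0 / of_int d"
    using step by (simp add: numeral_3_eq_3)
  ultimately show ?thesis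
    unfolding has_rational_3cycle_def c by blast
qed

lemma A_cong_left:
  assumes "[m = m'] (mod p)"
  shows "[A m n = A m' n] (mod p)"
  unfolding A_def using assms by (intro cong_add cong_mult cong_pow cong_refl)

lemma A_div_B_ge:
  fixes m :: int
  assumes "m \<ge> 1"
  shows "of_int m / 16 \<le> (of_int (A m 1) / of_int (B m 1) :: rat)"
proof -
  have "16 * A m 1 - m * B m 1 = 16*m^6 + 28*m^5 + 56*m^4 + 124*m^3 + 144*m^2 + 64*m + 16"
    unfolding A_def B_def power_one mult_1_right by Groebner_Basis.algebra
  also have "\<dots> \<ge> 0"
    using assms by simp
  finally have "of_int m * of_int (B m 1) \<le> (16 * of_int (A m 1) :: rat)"
    by (metis diff_ge_0_iff_ge of_int_le_iff of_int_mult of_int_numeral)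
  moreover have "B m 1 > 0"
    unfolding B_def using assms by simp
  ultimately show ?thesis
    by (simp add: field_simps)
qed

lemma prime_dvd_A_for_some_m:
  fixes p :: int
  assumes p: "prime p" and p7: "p mod 7 = 1"
  shows "\<exists>m. p dvd A m 1"
proof -
  have p_eq: "p = int (nat p)"
    using prime_gt_0_int[OF p] by simp
  have "prime (nat p)"
    using p p_eq by (metis prime_int_nat_transfer)
  moreover have "7 dvd nat p - 1"
  proof -
    have "int (nat p - 1) = p - 1"
      using prime_gt_0_int[OF p] by simp
    then show ?thesis
      using p7 by (metis mod_eq_dvd_iff mod_mod_trivial of_nat_dvd_iff of_nat_numeral)
  qed
  ultimately obtain w where w: "[w ^ 7 = 1] (mod nat p)" "\<not> [w = 1] (mod nat p)"
    using nontrivial_root_of_unity_mod_prime[of "nat p" 7] by auto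
  have "[int w ^ 7 = 1] (mod p)" "\<not> [int w = 1] (mod p)"
    using w by (subst p_eq, metis cong_int_iff of_nat_1 of_nat_power)+
  then have "p dvd (int w - 1) * (\<Sum>i<7. int w ^ i)" "\<not> p dvd int w - 1"
    by (simp_all add: cong_iff_dvd_diff power_diff_1_eq)
  then have "p dvd (\<Sum>i<7. int w ^ i)"
    using p prime_dvd_mult_iff by blast
  then have "p dvd A (int w + int w ^ 4) 1"
    unfolding A_at_root_of_unity by simp
  then show ?thesis ..
qed

lemma infinite_A_B_values_with_prime_factor:
  fixes p :: int
  assumes p: "prime p" and p7: "p mod 7 = 1"
  shows "infinite {c :: rat. \<exists>m n :: int. coprime m n \<and> m * n * (m + n) \<noteq> 0 \<and>
           c = - of_int (A m n) / of_int (B m n) \<and> p dvd A m n}"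
    (is "infinite ?S")
proof -
  obtain m0 where m0: "p dvd A m0 1"
    using prime_dvd_A_for_some_m[OF p p7] ..
  have "\<exists>c\<in>?S. c < r" for r :: rat
  proof -
    define k where "k = \<lceil>\<bar>r\<bar>\<rceil>"
    define m where "m = m0 mod p + p * (16 * k + 1)"
    have "k \<ge> 0" "m0 mod p \<ge> 0"
      using prime_gt_0_int[OF p] unfolding k_def by simp_all
    moreover have "16 * k + 1 \<le> p * (16 * k + 1)"
      using prime_gt_0_int[OF p] \<open>k \<ge> 0\<close> by (simp add: mult_le_cancel_right1)
    ultimately have m: "m \<ge> 16 * k + 1"
      unfolding m_def by linarith
    have "[m = m0] (mod p)"
      unfolding m_def cong_def by simp
    then have "p dvd A m 1"
      using m0 A_cong_left cong_dvd_iff by blast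
    then have "- of_int (A m 1) / of_int (B m 1) \<in> ?S"
      using m \<open>k \<ge> 0\<close> by (intro CollectI exI[of _ m] exI[of _ 1]) auto
    moreover have "- of_int (A m 1) / of_int (B m 1) < r"
    proof -
      have "- of_int (A m 1) / of_int (B m 1) \<le> - (of_int m / 16 :: rat)"
        using A_div_B_ge m \<open>k \<ge> 0\<close> by simp
      moreover have "\<bar>r\<bar> \<le> of_int k" "(of_int m :: rat) \<ge> 16 * of_int k + 1"
        using m unfolding k_def by (simp_all flip: of_int_le_iff)
      ultimately show ?thesis
        by linarith
    qed
    ultimately show ?thesis
      by blast
  qed
  then have "\<not> bdd_below ?S"
    unfolding bdd_below_def by (meson not_le)
  then show ?thesis
    by (meson bdd_below_finite)
qed

theorem theorem3:
  shows "(\<forall>m n :: int. coprime m n \<and> m * n * (m + n) \<noteq> 0 \<longrightarrow>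
            (\<exists>a b :: nat. A m n = 7 ^ a * (14 * int b + 1) \<and>
               (\<forall>q :: int. prime q \<and> q dvd (14 * int b + 1) \<longrightarrow> q mod 7 = 1)))
       \<and> (\<forall>p :: int. prime p \<and> p mod 7 = 1 \<longrightarrow>
            (let S = {c :: rat. \<exists>m n :: int. coprime m n \<and> m * n * (m + n) \<noteq> 0 \<and>
                         c = - of_int (A m n) / of_int (B m n) \<and> p dvd A m n}
             in infinite S \<and> (\<forall>c\<in>S. has_rational_3cycle c)))"
proof (intro conjI allI impI)
  fix m n :: int
  assume "coprime m n \<and> m * n * (m + n) \<noteq> 0"
  then show "\<exists>a b :: nat. A m n = 7 ^ a * (14 * int b + 1) \<and>
      (\<forall>q :: int. prime q \<and> q dvd (14 * int b + 1) \<longrightarrow> q mod 7 = 1)"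
    using A_eq_7_power_times_14b_plus_1 by blast
next
  fix p :: int
  assume "prime p \<and> p mod 7 = 1"
  then show "let S = {c :: rat. \<exists>m n :: int. coprime m n \<and> m * n * (m + n) \<noteq> 0 \<and>
                c = - of_int (A m n) / of_int (B m n) \<and> p dvd A m n}
      in infinite S \<and> (\<forall>c\<in>S. has_rational_3cycle c)"
    unfolding Let_def using infinite_A_B_values_with_prime_factor has_rational_3cycle_A_B by auto
qed

end
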